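(* Let $F:\mathbb{R}^n\to\mathbb{R}^n$ be of class $\mathscr{C}^1$, $G(x)=(x,F(x))$, and let $d\mu(x)=g(x)\,dx$ with $g$ smooth and positive; let $\pi=\mu\circ G^{-1}$ (so $\iint\Theta\,d\pi=\int\Theta(x,F(x))g(x)\,dx$) and $\langle T_\mu,\varphi\rangle=\int\varphi g\,dx$. For $i,j\in\{1,\dots,n\}$ let $S^1_i=\frac{\partial\pi}{\partial x_i}$ and $S^2_j=\frac{\partial\pi}{\partial y_j}$ be the distributional partial derivatives of $\pi$ in $\mathbb{R}^{2n}$ (variables $(x,y)$). Then for $\Phi\in\mathscr{C}^\infty_c(\mathbb{R}^{2n})$ the Kirchhoff divergences with respect to $T_\mu$ and $S^1_i$, resp. $S^2_j$, are $$Kir_{i,1}\Phi=\frac1g\frac{\partial}{\partial x_i}[g\cdot(\Phi\circ G)]-\frac{\partial\Phi}{\partial x_i}\circ G,\qquad Kir_{j,2}\Phi=-\frac{\partial\Phi}{\partial y_j}\circ G,$$ and for $f$ smooth, with $\Phi(x,y)=f(y)-f(x)$, $$\Delta_{i,1}f=\frac{\partial F}{\partial x_i}\cdot(\nabla f\circ F)+[(f\circ F)-f]\frac{\partial}{\partial x_i}(\log g),\qquad \Delta_{j,2}f=-\frac{\partial f}{\partial x_j}\circ F.$$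
   Context: $\frac{\partial\Phi}{\partial x_i}\circ G$ means the partial derivative of $\Phi$ in its $i$-th first-group variable evaluated at $(x,F(x))$; similarly for $y_j$. Distributional derivatives: $\langle\!\langle\partial\pi/\partial x_i,\Theta\rangle\!\rangle=-\iint\partial\Theta/\partial x_i\,d\pi$. A function $\psi$ is the Kirchhoff divergence of $\Phi$ with respect to $T$ and $S$ if $\langle T,\varphi\psi\rangle=\langle\!\langle S,\varphi\Phi\rangle\!\rangle$ for all $\varphi\in\mathscr{C}_c^\infty(\mathbb{R}^n)$, where $(\varphi\Phi)(x,y)=\varphi(x)\Phi(x,y)$; the Laplacian is the Kirchhoff divergence of $f(y)-f(x)$. *)

theory Defs
  imports "HOL-Analysis.Analysis"
begin

fun Ck :: "nat \<Rightarrow> ('a::euclidean_space \<Rightarrow> 'b::real_normed_vector) \<Rightarrow> bool" where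
  "Ck 0 f = continuous_on UNIV f"
| "Ck (Suc k) f = ((\<forall>x. f differentiable (at x)) \<and>
      (\<forall>v\<in>Basis. Ck k (\<lambda>x. frechet_derivative f (at x) v)))"

definition smooth :: "('a::euclidean_space \<Rightarrow> 'b::real_normed_vector) \<Rightarrow> bool" where
  "smooth f \<longleftrightarrow> (\<forall>k. Ck k f)"

definition test_fun :: "('a::euclidean_space \<Rightarrow> real) \<Rightarrow> bool" where
  "test_fun f \<longleftrightarrow> smooth f \<and> compact (closure {x. f x \<noteq> 0})"

definition pd :: "'n::finite \<Rightarrow> (real^'n \<Rightarrow> 'b::real_normed_vector) \<Rightarrow> real^'n \<Rightarrow> 'b" where
  "pd i h x = frechet_derivative h (at x) (axis i 1)"

definition pd_x :: "'n::finite \<Rightarrow> (real^'n \<Rightarrow> real^'n \<Rightarrow> real) \<Rightarrow> real^'n \<Rightarrow> real^'n \<Rightarrow> real" where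
  "pd_x i \<Theta> x y = frechet_derivative (\<lambda>x'. \<Theta> x' y) (at x) (axis i 1)"

definition pd_y :: "'n::finite \<Rightarrow> (real^'n \<Rightarrow> real^'n \<Rightarrow> real) \<Rightarrow> real^'n \<Rightarrow> real^'n \<Rightarrow> real" where
  "pd_y j \<Theta> x y = frechet_derivative (\<lambda>y'. \<Theta> x y') (at y) (axis j 1)"

definition grad :: "(real^'n \<Rightarrow> real) \<Rightarrow> real^'n \<Rightarrow> real^'n" where
  "grad f x = (\<chi> k. pd k f x)"

definition T_mu :: "(real^'n \<Rightarrow> real) \<Rightarrow> (real^'n \<Rightarrow> real) \<Rightarrow> real" where
  "T_mu g \<phi> = integral UNIV (\<lambda>x. \<phi> x * g x)"

text \<open>The push-forward measure pi = mu o G^{-1}, G(x) = (x, F x), as a functional: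
  iint Theta d pi = int Theta(x, F x) g(x) dx.\<close>
definition pi_meas :: "(real^'n \<Rightarrow> real^'n) \<Rightarrow> (real^'n \<Rightarrow> real) \<Rightarrow>
    (real^'n \<Rightarrow> real^'n \<Rightarrow> real) \<Rightarrow> real" where
  "pi_meas F g \<Theta> = integral UNIV (\<lambda>x. \<Theta> x (F x) * g x)"

definition dpi_dx :: "(real^'n \<Rightarrow> real^'n) \<Rightarrow> (real^'n \<Rightarrow> real) \<Rightarrow> 'n::finite \<Rightarrow>
    (real^'n \<Rightarrow> real^'n \<Rightarrow> real) \<Rightarrow> real" where
  "dpi_dx F g i \<Theta> = - pi_meas F g (pd_x i \<Theta>)"

definition dpi_dy :: "(real^'n \<Rightarrow> real^'n) \<Rightarrow> (real^'n \<Rightarrow> real) \<Rightarrow> 'n::finite \<Rightarrow>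
    (real^'n \<Rightarrow> real^'n \<Rightarrow> real) \<Rightarrow> real" where
  "dpi_dy F g j \<Theta> = - pi_meas F g (pd_y j \<Theta>)"

definition kirchhoff_div :: "((real^'n \<Rightarrow> real) \<Rightarrow> real) \<Rightarrow>
    ((real^'n \<Rightarrow> real^'n \<Rightarrow> real) \<Rightarrow> real) \<Rightarrow>
    (real^'n \<Rightarrow> real^'n \<Rightarrow> real) \<Rightarrow> (real^'n \<Rightarrow> real) \<Rightarrow> bool" where
  "kirchhoff_div T S \<Phi> \<psi> \<longleftrightarrow>
     (\<forall>\<phi>. test_fun \<phi> \<longrightarrow> T (\<lambda>x. \<phi> x * \<psi> x) = S (\<lambda>x y. \<phi> x * \<Phi> x y))"

end

theory Submission
  imports Defs
begin

text \<open>Write \<open>G x = (x, F x)\<close>. In the \<open>y\<close>-directions nothing needs to be integrated: \<open>\<partial>\<^sub>y\<^sub>j(\<phi>\<Phi>) = \<phi> \<partial>\<^sub>y\<^sub>j\<Phi>\<close>, so the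
  claimed formula is the definition of \<open>\<partial>\<pi>/\<partial>y\<^sub>j\<close> read backwards. In the \<open>x\<close>-directions the product rule gives
  \<open>\<phi> \<psi> g + (\<partial>\<^sub>x\<^sub>i(\<phi>\<Phi>) \<circ> G) g = \<partial>\<^sub>i(\<phi> g (\<Phi> \<circ> G))\<close> for the claimed \<open>\<psi>\<close>, and the right-hand side
  integrates to zero because it is a partial derivative of a compactly supported \<open>C\<^sup>1\<close> function (its
  difference quotients integrate to zero by translation invariance and converge dominatedly).
  The compact support comes from \<open>\<phi>\<close> alone, so \<open>\<Phi>\<close> only has to be \<open>C\<^sup>1\<close>; the Laplacian formulas
  are then the case \<open>\<Phi>(x, y) = f y - f x\<close>, simplified by the chain rule.\<close>

lemma Ck1_iff:
  "Ck 1 f \<longleftrightarrow> (\<forall>x. f differentiable (at x)) \<and>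
     (\<forall>v\<in>Basis. continuous_on UNIV (\<lambda>x. frechet_derivative f (at x) v))"
  by (simp add: One_nat_def)

lemma Ck1I:
  assumes "\<And>x. (f has_derivative f' x) (at x)"
    and "\<And>v. continuous_on UNIV (\<lambda>x. f' x v)"
  shows "Ck 1 f"
proof -
  have "frechet_derivative f (at x) = f' x" for x
    using assms(1) frechet_derivative_at by metis
  then show ?thesis
    using assms unfolding Ck1_iff differentiable_def by auto
qed

lemma Ck1_has_derivative:
  "Ck 1 f \<Longrightarrow> (f has_derivative frechet_derivative f (at x)) (at x)"
  using frechet_derivative_works unfolding Ck1_iff by blast

lemma Ck1_differentiable: "Ck 1 f \<Longrightarrow> f differentiable (at x)"
  unfolding Ck1_iff by blast

lemma Ck1_continuous_on: "Ck 1 f \<Longrightarrow> continuous_on UNIV f"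
  unfolding Ck1_iff
  by (meson continuous_at_imp_continuous_on differentiable_imp_continuous_within)

lemma Ck1_continuous_on_frechet_derivative:
  fixes f :: "'a::euclidean_space \<Rightarrow> 'b::real_normed_vector"
  assumes f: "Ck 1 f" and a: "continuous_on UNIV a" and v: "continuous_on UNIV v"
  shows "continuous_on UNIV (\<lambda>x. frechet_derivative f (at (a x)) (v x))"
proof -
  have "linear (frechet_derivative f (at z))" for z
    using f linear_frechet_derivative unfolding Ck1_iff by blast
  then have expand: "frechet_derivative f (at (a x)) (v x) =
      (\<Sum>b\<in>Basis. (v x \<bullet> b) *\<^sub>R frechet_derivative f (at (a x)) b)" for x
    by (subst euclidean_representation[symmetric, of "v x"]) (simp add: linear_sum linear_cmul)
  have "continuous_on UNIV (\<lambda>x. frechet_derivative f (at (a x)) b)" if "b \<in> Basis" for b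
    using continuous_on_compose2[OF _ a, of UNIV "\<lambda>z. frechet_derivative f (at z) b"] f that
    unfolding Ck1_iff by auto
  then show ?thesis
    unfolding expand by (intro continuous_intros v) auto
qed

lemma smooth_imp_Ck1: "smooth f \<Longrightarrow> Ck 1 f"
  unfolding smooth_def by blast

lemma test_fun_imp_Ck1: "test_fun \<phi> \<Longrightarrow> Ck 1 \<phi>"
  using smooth_imp_Ck1 unfolding test_fun_def by blast

lemma test_fun_compact_support:
  assumes "test_fun \<phi>"
  obtains K where "compact K" "\<And>x. x \<notin> K \<Longrightarrow> \<phi> x = 0"
proof (rule that)
  show "compact (closure {x. \<phi> x \<noteq> 0})"
    using assms unfolding test_fun_def by (rule conjunct2)
  show "\<phi> x = 0" if "x \<notin> closure {x. \<phi> x \<noteq> 0}" for x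
    using that closure_subset[of "{x. \<phi> x \<noteq> 0}"] by auto
qed

lemma pd_eqI: "(h has_derivative h') (at x) \<Longrightarrow> pd i h x = h' (axis i 1)"
  unfolding pd_def by (metis frechet_derivative_at)

lemma pd_x_eqI:
  "((\<lambda>x'. \<Theta> x' y) has_derivative h') (at x) \<Longrightarrow> pd_x i \<Theta> x y = h' (axis i 1)"
  unfolding pd_x_def by (metis frechet_derivative_at)

lemma pd_y_eqI:
  "((\<lambda>y'. \<Theta> x y') has_derivative h') (at y) \<Longrightarrow> pd_y j \<Theta> x y = h' (axis j 1)"
  unfolding pd_y_def by (metis frechet_derivative_at)

lemma pd_mult:
  fixes u v :: "real^'n \<Rightarrow> real"
  assumes "u differentiable (at x)" and "v differentiable (at x)"
  shows "pd i (\<lambda>x. u x * v x) x = u x * pd i v x + pd i u x * v x"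
  using pd_eqI[OF has_derivative_mult[OF assms[unfolded frechet_derivative_works]]]
  by (simp add: pd_def)

lemma pd_diff:
  fixes u v :: "real^'n \<Rightarrow> 'b::real_normed_vector"
  assumes "u differentiable (at x)" and "v differentiable (at x)"
  shows "pd i (\<lambda>x. u x - v x) x = pd i u x - pd i v x"
  using pd_eqI[OF has_derivative_diff[OF assms[unfolded frechet_derivative_works]]]
  by (simp add: pd_def)

lemma pd_ln:
  fixes g :: "real^'n \<Rightarrow> real"
  assumes "g differentiable (at x)" and "g x > 0"
  shows "pd i (\<lambda>x. ln (g x)) x = pd i g x / g x"
proof -
  have "(ln has_derivative (*) (inverse (g x))) (at (g x))"
    using DERIV_ln[OF assms(2)] by (simp add: has_field_derivative_def)
  from pd_eqI[OF has_derivative_compose[OF assms(1)[unfolded frechet_derivative_works] this]]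
  show ?thesis
    by (simp add: pd_def divide_inverse mult.commute)
qed

lemma inner_grad:
  fixes f :: "real^'n \<Rightarrow> real"
  assumes "f differentiable (at y)"
  shows "w \<bullet> grad f y = frechet_derivative f (at y) w"
proof -
  have lin: "linear (frechet_derivative f (at y))"
    using assms by (rule linear_frechet_derivative)
  have "frechet_derivative f (at y) w = frechet_derivative f (at y) (\<Sum>k\<in>UNIV. w $ k *\<^sub>R axis k 1)"
    by (simp add: basis_expansion flip: scalar_mult_eq_scaleR)
  also have "\<dots> = (\<Sum>k\<in>UNIV. w $ k * pd k f y)"
    using lin by (simp add: linear_sum linear_cmul pd_def)
  finally show ?thesis
    by (simp add: grad_def inner_vec_def)
qed

lemma pd_compose:
  fixes F :: "real^'n \<Rightarrow> real^'m" and f :: "real^'m \<Rightarrow> real"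
  assumes "F differentiable (at x)" and "f differentiable (at (F x))"
  shows "pd i (\<lambda>x. f (F x)) x = pd i F x \<bullet> grad f (F x)"
  using pd_eqI[OF has_derivative_compose[OF assms[unfolded frechet_derivative_works]]] inner_grad[OF assms(2)]
  by (simp add: pd_def)

lemma pd_x_mult_left:
  fixes \<phi> :: "real^'n \<Rightarrow> real" and \<Phi> :: "real^'n \<Rightarrow> real^'n \<Rightarrow> real"
  assumes "\<phi> differentiable (at x)" and "(\<lambda>x'. \<Phi> x' y) differentiable (at x)"
  shows "pd_x i (\<lambda>x y. \<phi> x * \<Phi> x y) x y = \<phi> x * pd_x i \<Phi> x y + pd i \<phi> x * \<Phi> x y"
  using pd_x_eqI[where \<Theta> = "\<lambda>x y. \<phi> x * \<Phi> x y",
      OF has_derivative_mult[OF assms[unfolded frechet_derivative_works]]]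
  by (simp add: pd_def pd_x_def)

lemma pd_y_mult_left:
  fixes \<phi> :: "real^'n \<Rightarrow> real" and \<Phi> :: "real^'n \<Rightarrow> real^'n \<Rightarrow> real"
  assumes "(\<lambda>y'. \<Phi> x y') differentiable (at y)"
  shows "pd_y j (\<lambda>x y. \<phi> x * \<Phi> x y) x y = \<phi> x * pd_y j \<Phi> x y"
  using pd_y_eqI[where \<Theta> = "\<lambda>x y. \<phi> x * \<Phi> x y",
      OF has_derivative_mult_right[OF assms[unfolded frechet_derivative_works]]]
  by (simp add: pd_y_def)

lemma pd_x_increment:
  fixes f :: "real^'n \<Rightarrow> real"
  assumes "f differentiable (at x)"
  shows "pd_x i (\<lambda>x y. f y - f x) x y = - pd i f x"
  using pd_x_eqI[where \<Theta> = "\<lambda>x y. f y - f x",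
      OF has_derivative_diff[OF has_derivative_const assms[unfolded frechet_derivative_works]]]
  by (simp add: pd_def)

lemma pd_y_increment:
  fixes f :: "real^'n \<Rightarrow> real"
  assumes "f differentiable (at y)"
  shows "pd_y j (\<lambda>x y. f y - f x) x y = pd j f y"
  using pd_y_eqI[where \<Theta> = "\<lambda>x y. f y - f x",
      OF has_derivative_diff[OF assms[unfolded frechet_derivative_works] has_derivative_const]]
  by (simp add: pd_def)

lemma Ck1_case_prod_differentiable:
  fixes \<Phi> :: "'a::euclidean_space \<Rightarrow> 'b::euclidean_space \<Rightarrow> real"
  assumes "Ck 1 (\<lambda>(x, y). \<Phi> x y)"
  shows "(\<lambda>x'. \<Phi> x' y) differentiable (at x)" and "(\<lambda>y'. \<Phi> x y') differentiable (at y)"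
proof -
  have U: "((\<lambda>(x, y). \<Phi> x y) has_derivative frechet_derivative (\<lambda>(x, y). \<Phi> x y) (at z)) (at z)" for z
    by (rule Ck1_has_derivative[OF assms])
  have "((\<lambda>x'. (x', y)) has_derivative (\<lambda>v. (v, 0))) (at x)"
    by (intro has_derivative_Pair has_derivative_ident has_derivative_const)
  from has_derivative_compose[OF this U] show "(\<lambda>x'. \<Phi> x' y) differentiable (at x)"
    unfolding differentiable_def by auto
  have "((\<lambda>y'. (x, y')) has_derivative (\<lambda>w. (0, w))) (at y)"
    by (intro has_derivative_Pair has_derivative_ident has_derivative_const)
  from has_derivative_compose[OF this U] show "(\<lambda>y'. \<Phi> x y') differentiable (at y)"
    unfolding differentiable_def by auto
qed

lemma Ck1_mult:
  fixes u v :: "'a::euclidean_space \<Rightarrow> real"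
  assumes u: "Ck 1 u" and v: "Ck 1 v"
  shows "Ck 1 (\<lambda>x. u x * v x)"
proof (rule Ck1I)
  show "((\<lambda>x. u x * v x) has_derivative
      (\<lambda>w. u x * frechet_derivative v (at x) w + frechet_derivative u (at x) w * v x)) (at x)" for x
    by (rule has_derivative_mult[OF Ck1_has_derivative[OF u] Ck1_has_derivative[OF v]])
  show "continuous_on UNIV
      (\<lambda>x. u x * frechet_derivative v (at x) w + frechet_derivative u (at x) w * v x)" for w
  proof -
    have D: "continuous_on UNIV (\<lambda>x. frechet_derivative h (at x) w)" if "Ck 1 h" for h :: "'a \<Rightarrow> real"
      using Ck1_continuous_on_frechet_derivative[OF that continuous_on_id continuous_on_const] by simp
    show ?thesis
      by (intro continuous_intros D[OF u] D[OF v] Ck1_continuous_on[OF u] Ck1_continuous_on[OF v])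
  qed
qed

lemma Ck1_compose_graph:
  fixes \<Phi> :: "'a::euclidean_space \<Rightarrow> 'b::euclidean_space \<Rightarrow> real"
  assumes \<Phi>: "Ck 1 (\<lambda>(x, y). \<Phi> x y)" and F: "Ck 1 F"
  shows "Ck 1 (\<lambda>x. \<Phi> x (F x))"
proof (rule Ck1I)
  let ?U = "\<lambda>(x, y). \<Phi> x y" and ?DF = "\<lambda>x. frechet_derivative F (at x)"
  show "((\<lambda>x. \<Phi> x (F x)) has_derivative
      (\<lambda>v. frechet_derivative ?U (at (x, F x)) (v, ?DF x v))) (at x)" for x
    using has_derivative_compose[OF has_derivative_Pair[OF has_derivative_ident Ck1_has_derivative[OF F]]
        Ck1_has_derivative[OF \<Phi>]]
    by simp
  have "continuous_on UNIV (\<lambda>x. (x, F x))"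
    by (intro continuous_intros Ck1_continuous_on[OF F])
  moreover have "continuous_on UNIV (\<lambda>x. (v, ?DF x v))" for v
    by (intro continuous_intros Ck1_continuous_on_frechet_derivative[OF F])
  ultimately show "continuous_on UNIV (\<lambda>x. frechet_derivative ?U (at (x, F x)) (v, ?DF x v))" for v
    by (rule Ck1_continuous_on_frechet_derivative[OF \<Phi>])
qed

lemma Ck1_case_prod_diff:
  fixes f :: "'a::euclidean_space \<Rightarrow> real"
  assumes f: "Ck 1 f"
  shows "Ck 1 (\<lambda>(x, y). f y - f x)"
proof (rule Ck1I)
  let ?Df = "\<lambda>x. frechet_derivative f (at x)"
  show "((\<lambda>(x, y). f y - f x) has_derivative (\<lambda>w. ?Df (snd z) (snd w) - ?Df (fst z) (fst w))) (at z)"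
    for z :: "'a \<times> 'a"
    using has_derivative_diff[OF
        has_derivative_compose[OF has_derivative_snd[OF has_derivative_ident] Ck1_has_derivative[OF f]]
        has_derivative_compose[OF has_derivative_fst[OF has_derivative_ident] Ck1_has_derivative[OF f]]]
    by (simp add: case_prod_beta')
  show "continuous_on UNIV (\<lambda>z. ?Df (snd z) (snd w) - ?Df (fst z) (fst w))" for w :: "'a \<times> 'a"
    by (intro continuous_intros Ck1_continuous_on_frechet_derivative[OF f])
qed

lemma pd_has_real_derivative_along_axis:
  fixes h :: "real^'n \<Rightarrow> real"
  assumes "\<forall>x. h differentiable (at x)"
  shows "((\<lambda>s. h (x + s *\<^sub>R axis i 1)) has_real_derivative pd i h (x + s *\<^sub>R axis i 1)) (at s)"
proof -
  let ?e = "axis i 1 :: real^'n" and ?y = "x + s *\<^sub>R axis i 1"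
  have "((\<lambda>s. x + s *\<^sub>R ?e) has_derivative (\<lambda>s. s *\<^sub>R ?e)) (at s)"
    by (auto intro!: derivative_eq_intros)
  from has_derivative_compose[OF this assms[rule_format, unfolded frechet_derivative_works, of ?y]]
  have "((\<lambda>s. h (x + s *\<^sub>R ?e)) has_derivative (\<lambda>u. pd i h ?y * u)) (at s)"
    using linear_frechet_derivative[of h "at ?y"] assms
    by (simp add: pd_def linear_cmul mult.commute)
  then show ?thesis
    by (simp add: has_field_derivative_def)
qed

lemma has_integral_translate_bounded_support:
  fixes h :: "'a::euclidean_space \<Rightarrow> real"
  assumes h: "continuous_on UNIV h" and S: "bounded S" and zero: "\<And>x. x \<notin> S \<Longrightarrow> h x = 0"
  shows "((\<lambda>x. h (x + c)) has_integral integral UNIV h) UNIV"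
proof -
  obtain a b where ab: "S \<subseteq> cbox a b"
    using S bounded_subset_cbox_symmetric by blast
  have hab: "(h has_integral integral (cbox a b) h) (cbox a b)"
    using integrable_continuous[OF continuous_on_subset[OF h]] by blast
  then have "(h has_integral integral (cbox a b) h) UNIV"
    by (rule has_integral_on_superset) (use ab zero in auto)
  then have "integral UNIV h = integral (cbox a b) h"
    by (rule integral_unique)
  moreover have "((\<lambda>x. h (x + c)) has_integral integral (cbox a b) h) UNIV"
  proof (rule has_integral_on_superset[OF has_integral_shift_cbox[OF hab]])
    fix x
    assume "x \<notin> cbox (a - c) (b - c)"
    then have "x + c \<notin> cbox a b"
      by (fastforce simp: mem_box inner_diff_left inner_add_left)
    with ab zero show "h (x + c) = 0"
      by blast
  qed auto
  ultimately show ?thesis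
    by simp
qed

lemma difference_quotient_along_axis_bound:
  fixes h :: "real^'n \<Rightarrow> real"
  assumes diff: "\<forall>x. h differentiable (at x)"
    and zero: "\<And>x. x \<notin> cball 0 R \<Longrightarrow> h x = 0"
    and M: "\<And>y. y \<in> cball 0 (R + 2) \<Longrightarrow> \<bar>pd i h y\<bar> \<le> M"
    and t: "0 < t" "t \<le> 1"
  shows "\<bar>(h (x + t *\<^sub>R axis i 1) - h x) / t\<bar> \<le> (if x \<in> cball 0 (R + 1) then M else 0)"
proof (cases "x \<in> cball 0 (R + 1)")
  case False
  then have "x \<notin> cball 0 R" and "x + t *\<^sub>R axis i 1 \<notin> cball 0 R"
    using t norm_triangle_ineq4[of "x + t *\<^sub>R axis i 1" "t *\<^sub>R axis i 1"] by auto
  with False show ?thesis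
    by (simp add: zero)
next
  case True
  obtain z where z: "0 < z" "z < t"
    and mvt: "h (x + t *\<^sub>R axis i 1) - h (x + 0 *\<^sub>R axis i 1) = (t - 0) * pd i h (x + z *\<^sub>R axis i 1)"
    using MVT2[of 0 t "\<lambda>s. h (x + s *\<^sub>R axis i 1)" "\<lambda>s. pd i h (x + s *\<^sub>R axis i 1)"]
      pd_has_real_derivative_along_axis[OF diff] t by blast
  have "norm (x + z *\<^sub>R axis i 1) \<le> R + 2"
    using True z t norm_triangle_ineq[of x "z *\<^sub>R axis i 1"] by simp
  with True M mvt t show ?thesis
    by simp
qed

lemma difference_quotient_along_axis_tendsto:
  fixes h :: "real^'n \<Rightarrow> real"
  assumes "\<forall>x. h differentiable (at x)"
  shows "(\<lambda>k. (h (x + (1 / Suc k) *\<^sub>R axis i 1) - h x) / (1 / Suc k)) \<longlonglongrightarrow> pd i h x"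
proof -
  have "((\<lambda>s. (h (x + s *\<^sub>R axis i 1) - h x) / s) \<longlongrightarrow> pd i h x) (at 0)"
    using pd_has_real_derivative_along_axis[OF assms, of x i 0] by (simp add: has_field_derivative_iff)
  moreover have "filterlim (\<lambda>k. 1 / real (Suc k)) (at 0) sequentially"
    unfolding filterlim_at
  proof
    show "\<forall>\<^sub>F k in sequentially. 1 / real (Suc k) \<in> UNIV \<and> 1 / real (Suc k) \<noteq> 0"
      by simp
    show "(\<lambda>k. 1 / real (Suc k)) \<longlonglongrightarrow> 0"
      using LIMSEQ_inverse_real_of_nat by (simp add: inverse_eq_divide)
  qed
  ultimately show ?thesis
    by (rule filterlim_compose)
qed

lemma pd_has_integral_0:
  fixes h :: "real^'n \<Rightarrow> real"
  assumes h: "Ck 1 h" and K: "compact K" and zero: "\<And>x. x \<notin> K \<Longrightarrow> h x = 0"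
  shows "(pd i h has_integral 0) UNIV"
proof -
  let ?e = "axis i 1 :: real^'n"
  have diff: "\<forall>x. h differentiable (at x)"
    using h unfolding Ck1_iff by blast
  obtain R where R: "K \<subseteq> cball 0 R"
    using compact_imp_bounded[OF K] unfolding bounded_iff by (auto simp: subset_iff)
  have "continuous_on UNIV (pd i h)"
    using Ck1_continuous_on_frechet_derivative[OF h continuous_on_id continuous_on_const]
    by (simp add: pd_def)
  then have "bounded (pd i h ` cball 0 (R + 2))"
    by (intro compact_imp_bounded compact_continuous_image) (auto intro: continuous_on_subset)
  then obtain M where M: "\<And>y. y \<in> cball 0 (R + 2) \<Longrightarrow> \<bar>pd i h y\<bar> \<le> M"
    unfolding bounded_iff by (metis image_eqI real_norm_def)
  define t :: "nat \<Rightarrow> real" where "t k = 1 / Suc k" for k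
  have t: "0 < t k" "t k \<le> 1" for k
    by (auto simp: t_def)
  define Q where "Q k x = (h (x + t k *\<^sub>R ?e) - h x) / t k" for k x
  define G :: "real^'n \<Rightarrow> real" where "G x = (if x \<in> cball 0 (R + 1) then M else 0)" for x
  have shift: "((\<lambda>x. h (x + c)) has_integral integral UNIV h) UNIV" for c
    by (rule has_integral_translate_bounded_support[OF Ck1_continuous_on[OF h] compact_imp_bounded[OF K] zero])
  have Q_integral: "(Q k has_integral 0) UNIV" for k
    using has_integral_divide[OF has_integral_diff[OF shift[of "t k *\<^sub>R ?e"] shift[of 0]], of "t k"]
    by (simp add: Q_def[abs_def])
  have G_integrable: "G integrable_on UNIV"
    unfolding G_def[abs_def] integrable_restrict_UNIV by (simp add: integrable_on_const)
  have zero_outside_ball: "h x = 0" if "x \<notin> cball 0 R" for x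
    using that R zero by blast
  have Q_bound: "norm (Q k x) \<le> G x" for k x
    using difference_quotient_along_axis_bound[OF diff zero_outside_ball M t] by (simp add: Q_def G_def)
  have Q_limit: "(\<lambda>k. Q k x) \<longlonglongrightarrow> pd i h x" for x
    using difference_quotient_along_axis_tendsto[OF diff] by (simp add: Q_def t_def)
  have integrable: "pd i h integrable_on UNIV"
    and "(\<lambda>k. integral UNIV (Q k)) \<longlonglongrightarrow> integral UNIV (pd i h)"
    using dominated_convergence[of Q UNIV G "pd i h"] Q_integral G_integrable Q_bound Q_limit
    by blast+
  moreover have "integral UNIV (Q k) = 0" for k
    by (rule integral_unique[OF Q_integral])
  ultimately have "integral UNIV (pd i h) = 0"
    by (simp add: LIMSEQ_const_iff)
  with integrable[unfolded has_integral_integral] show ?thesis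
    by simp
qed

lemma integral_eq_neg_if_sum_has_integral_0:
  fixes a b :: "'a::euclidean_space \<Rightarrow> real"
  assumes "((\<lambda>x. a x + b x) has_integral 0) UNIV"
  shows "integral UNIV a = - integral UNIV b"
proof (cases "b integrable_on UNIV")
  case True
  have "((\<lambda>x. (a x + b x) - b x) has_integral 0 - integral UNIV b) UNIV"
    using has_integral_diff[OF assms True[unfolded has_integral_integral]] .
  then show ?thesis
    by (simp add: integral_unique)
next
  case False
  have "\<not> a integrable_on UNIV"
  proof
    assume "a integrable_on UNIV"
    then have "(\<lambda>x. (a x + b x) - a x) integrable_on UNIV"
      using assms by (intro integrable_diff) auto
    with False show False
      by simp
  qed
  with False show ?thesis
    by (simp add: not_integrable_integral)
qed

lemma kirchhoff_div_dpi_dx: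
  fixes F :: "real^'n \<Rightarrow> real^'n" and g :: "real^'n \<Rightarrow> real"
    and \<Phi> :: "real^'n \<Rightarrow> real^'n \<Rightarrow> real"
  assumes F: "Ck 1 F" and g: "Ck 1 g" and g_nonzero: "\<And>x. g x \<noteq> 0"
    and \<Phi>: "Ck 1 (\<lambda>(x, y). \<Phi> x y)"
  shows "kirchhoff_div (T_mu g) (dpi_dx F g i) \<Phi>
           (\<lambda>x. (1 / g x) * pd i (\<lambda>x'. g x' * \<Phi> x' (F x')) x - pd_x i \<Phi> x (F x))"
  unfolding kirchhoff_div_def
proof (intro allI impI)
  fix \<phi> :: "real^'n \<Rightarrow> real"
  assume "test_fun \<phi>"
  then have \<phi>: "Ck 1 \<phi>"
    by (rule test_fun_imp_Ck1)
  obtain K where K: "compact K" "\<And>x. x \<notin> K \<Longrightarrow> \<phi> x = 0"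
    using test_fun_compact_support[OF \<open>test_fun \<phi>\<close>] by blast
  define P where "P x = g x * \<Phi> x (F x)" for x
  have P: "Ck 1 P"
    unfolding P_def[abs_def] by (rule Ck1_mult[OF g Ck1_compose_graph[OF \<Phi> F]])
  have "(pd i (\<lambda>x. \<phi> x * P x) has_integral 0) UNIV"
    by (rule pd_has_integral_0[OF Ck1_mult[OF \<phi> P] K(1)]) (simp add: K(2))
  moreover have "\<phi> x * ((1 / g x) * pd i P x - pd_x i \<Phi> x (F x)) * g x
      + pd_x i (\<lambda>x y. \<phi> x * \<Phi> x y) x (F x) * g x = pd i (\<lambda>x. \<phi> x * P x) x" for x
    using pd_mult[where x = x and i = i, OF Ck1_differentiable[OF \<phi>] Ck1_differentiable[OF P]]
      pd_x_mult_left[where x = x and y = "F x" and i = i,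
        OF Ck1_differentiable[OF \<phi>] Ck1_case_prod_differentiable(1)[OF \<Phi>]]
      g_nonzero[of x]
    by (simp add: P_def field_simps)
  ultimately show "T_mu g (\<lambda>x. \<phi> x * ((1 / g x) * pd i (\<lambda>x'. g x' * \<Phi> x' (F x')) x - pd_x i \<Phi> x (F x)))
      = dpi_dx F g i (\<lambda>x y. \<phi> x * \<Phi> x y)"
    unfolding T_mu_def dpi_dx_def pi_meas_def P_def[symmetric]
    by (intro integral_eq_neg_if_sum_has_integral_0) simp
qed

lemma kirchhoff_div_dpi_dy:
  fixes \<Phi> :: "real^'n \<Rightarrow> real^'n \<Rightarrow> real"
  assumes "\<And>x y. (\<lambda>y'. \<Phi> x y') differentiable (at y)"
  shows "kirchhoff_div (T_mu g) (dpi_dy F g j) \<Phi> (\<lambda>x. - pd_y j \<Phi> x (F x))"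
  unfolding kirchhoff_div_def T_mu_def dpi_dy_def pi_meas_def
  by (simp add: pd_y_mult_left[OF assms] flip: integral_neg)

lemma kirchhoff_dx_increment_eq:
  fixes F :: "real^'n \<Rightarrow> real^'n" and g f :: "real^'n \<Rightarrow> real"
  assumes F: "F differentiable (at x)" and g: "g differentiable (at x)" "g x > 0"
    and f: "\<And>y. f differentiable (at y)"
  shows "(1 / g x) * pd i (\<lambda>x'. g x' * (f (F x') - f x')) x - pd_x i (\<lambda>x y. f y - f x) x (F x)
       = pd i F x \<bullet> grad f (F x) + (f (F x) - f x) * pd i (\<lambda>x'. ln (g x')) x"
proof -
  have fF: "(\<lambda>x. f (F x)) differentiable (at x)"
    using differentiable_chain_at[OF F f] by (simp add: o_def)
  have "pd i (\<lambda>x'. g x' * (f (F x') - f x')) x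
      = g x * (pd i F x \<bullet> grad f (F x) - pd i f x) + pd i g x * (f (F x) - f x)"
    using pd_mult[OF g(1) differentiable_diff[OF fF f]] pd_diff[OF fF f] pd_compose[OF F f]
    by simp
  then show ?thesis
    using g(2) by (simp add: pd_x_increment[OF f] pd_ln[OF g] field_simps)
qed

theorem proposition5p1:
  fixes F :: "real^'n \<Rightarrow> real^'n" and g f :: "real^'n \<Rightarrow> real"
  assumes F_C1: "Ck 1 F"
    and g_smooth: "smooth g" and g_pos: "\<forall>x. g x > 0"
    and f_smooth: "smooth f"
  shows
    "(\<forall>(i::'n) \<Phi>. test_fun (\<lambda>(x, y). \<Phi> x y) \<longrightarrow>
        kirchhoff_div (T_mu g) (dpi_dx F g i) \<Phi>
          (\<lambda>x. (1 / g x) * pd i (\<lambda>x'. g x' * \<Phi> x' (F x')) x - pd_x i \<Phi> x (F x)))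
   \<and> (\<forall>(j::'n) \<Phi>. test_fun (\<lambda>(x, y). \<Phi> x y) \<longrightarrow>
        kirchhoff_div (T_mu g) (dpi_dy F g j) \<Phi> (\<lambda>x. - pd_y j \<Phi> x (F x)))
   \<and> (\<forall>i::'n.
        kirchhoff_div (T_mu g) (dpi_dx F g i) (\<lambda>x y. f y - f x)
          (\<lambda>x. pd i F x \<bullet> grad f (F x) + (f (F x) - f x) * pd i (\<lambda>x'. ln (g x')) x))
   \<and> (\<forall>j::'n.
        kirchhoff_div (T_mu g) (dpi_dy F g j) (\<lambda>x y. f y - f x) (\<lambda>x. - pd j f (F x)))"
proof -
  have g: "Ck 1 g"
    by (rule smooth_imp_Ck1[OF g_smooth])
  have f: "Ck 1 f"
    by (rule smooth_imp_Ck1[OF f_smooth])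
  have g_nonzero: "\<And>x. g x \<noteq> 0"
    using g_pos by (metis less_irrefl)
  have increment_dx: "kirchhoff_div (T_mu g) (dpi_dx F g i) (\<lambda>x y. f y - f x)
      (\<lambda>x. pd i F x \<bullet> grad f (F x) + (f (F x) - f x) * pd i (\<lambda>x'. ln (g x')) x)" for i
    using kirchhoff_div_dpi_dx[OF F_C1 g g_nonzero Ck1_case_prod_diff[OF f], of i]
      kirchhoff_dx_increment_eq[OF Ck1_differentiable[OF F_C1] Ck1_differentiable[OF g] _
        Ck1_differentiable[OF f]] g_pos
    by simp
  have increment_dy: "kirchhoff_div (T_mu g) (dpi_dy F g j) (\<lambda>x y. f y - f x) (\<lambda>x. - pd j f (F x))" for j
    using kirchhoff_div_dpi_dy[of "\<lambda>x y. f y - f x"] differentiable_diff[OF Ck1_differentiable[OF f]]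
      pd_y_increment[OF Ck1_differentiable[OF f]]
    by simp
  have test_dx: "kirchhoff_div (T_mu g) (dpi_dx F g i) \<Phi>
      (\<lambda>x. (1 / g x) * pd i (\<lambda>x'. g x' * \<Phi> x' (F x')) x - pd_x i \<Phi> x (F x))"
    if "test_fun (\<lambda>(x, y). \<Phi> x y)" for i \<Phi>
    using kirchhoff_div_dpi_dx[OF F_C1 g g_nonzero test_fun_imp_Ck1[OF that]] .
  have test_dy: "kirchhoff_div (T_mu g) (dpi_dy F g j) \<Phi> (\<lambda>x. - pd_y j \<Phi> x (F x))"
    if "test_fun (\<lambda>(x, y). \<Phi> x y)" for j \<Phi>
    by (intro kirchhoff_div_dpi_dy Ck1_case_prod_differentiable(2) test_fun_imp_Ck1 that)
  show ?thesis
    using test_dx test_dy increment_dx increment_dy by blast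
qed

end
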